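(* Let $\Gamma$ be a lattice satisfying the standing assumptions below. Let $\rho=(f_1,\dots,f_m)$, $m\ge 2$, be a face path with volume sequence $\Lambda(\rho)=(\nu_1,\dots,\nu_{m-1})$, and suppose there is a volume $\nu_0\notin\Lambda(\rho)$ with $f_1,f_m\in\partial(\nu_0)$ (i.e. $\rho$ is a simple face cycle). Then $W^Z(\rho)=\prod_{i=1}^m Z_{f_i}$ commutes with every element of the stabilizer group of the 3D toric code on $\Gamma$, i.e. it is a stabilizer or a logical operator.
   Context: $\Gamma$ is a finite, connected three-dimensional cell complex (lattice) with vertices $C_0(\Gamma)$, edges $C_1(\Gamma)$ (partial edges, incident on only one vertex, are allowed at the boundary), faces $C_2(\Gamma)$ and volumes $C_3(\Gamma)$. For a face $f$, $\partial(f)$ is its set of boundary edges; for a volume $\nu$, $\partial(\nu)$ is its set of boundary faces; for an edge $e$, $\iota(e)$ is the set of faces containing $e$ in their boundary. Every face lies in the boundary of at most two volumes. Standing assumptions: (L1) $\Gamma$ has no boundaries in its interior; (L2) the boundary of every face of $\Gamma$ and of its dual $\Gamma^*$ is either a closed path or an open path beginning and ending with partial edges; the dual complex is connected. The 3D toric code on $\Gamma$ has one qubit per face and stabilizer group generated by $B_e=\prod_{f\in\iota(e)}Z_f$ ($e\in C_1(\Gamma)$) and $A_\nu=\prod_{f\in\partial(\nu)}X_f$ ($\nu\in C_3(\Gamma)$). A logical operator is a Pauli operator commuting with all stabilizers but not in the stabilizer group (up to phase). A face path is a sequence of faces $(f_1,\dots,f_m)$ with pairwise distinct volumes $\nu_1,\dots,\nu_{m-1}$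 such that $f_i,f_{i+1}\in\partial(\nu_i)$. *)

theory Defs
  imports Main
begin

text \<open>A lattice is given by carrier sets V (vertices), E (edges), F (faces),
C (volumes), together with incidence data:
  ends e  : the set of vertices of edge e (one vertex for a partial edge, two otherwise),
  fbd f   : the set of boundary edges of face f,
  vbd nu  : the set of boundary faces of volume nu.\<close>

definition iota :: "'f set \<Rightarrow> ('f \<Rightarrow> 'e set) \<Rightarrow> 'e \<Rightarrow> 'f set" where
  "iota F fbd e = {f \<in> F. e \<in> fbd f}"

text \<open>Volumes containing a face in their boundary (dual endpoints of the dual edge).\<close>
definition face_vols :: "'c set \<Rightarrow> ('c \<Rightarrow> 'f set) \<Rightarrow> 'f \<Rightarrow> 'c set" where
  "face_vols C vbd f = {\<nu> \<in> C. f \<in> vbd \<nu>}"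

text \<open>Generic notion of paths in an incidence structure where each "edge" s has
a set of endpoints  ends s  (one endpoint = partial edge).\<close>
definition closed_path :: "('s \<Rightarrow> 'n set) \<Rightarrow> 's set \<Rightarrow> bool" where
  "closed_path ends S \<longleftrightarrow> (\<exists>es. distinct es \<and> set es = S \<and> es \<noteq> [] \<and>
      (\<forall>s\<in>S. card (ends s) = 2) \<and>
      (\<forall>i < length es. ends (es ! i) \<inter> ends (es ! ((i + 1) mod length es)) \<noteq> {}))"

definition open_path_partial :: "('s \<Rightarrow> 'n set) \<Rightarrow> 's set \<Rightarrow> bool" where
  "open_path_partial ends S \<longleftrightarrow> (\<exists>es. distinct es \<and> set es = S \<and> es \<noteq> [] \<and>
      card (ends (hd es)) = 1 \<and> card (ends (last es)) = 1 \<and>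
      (\<forall>i. Suc i < length es \<longrightarrow> ends (es ! i) \<inter> ends (es ! Suc i) \<noteq> {}))"

definition lattice3 ::
  "'v set \<Rightarrow> 'e set \<Rightarrow> 'f set \<Rightarrow> 'c set \<Rightarrow>
   ('e \<Rightarrow> 'v set) \<Rightarrow> ('f \<Rightarrow> 'e set) \<Rightarrow> ('c \<Rightarrow> 'f set) \<Rightarrow> bool" where
  "lattice3 V E F C ends fbd vbd \<longleftrightarrow>
     finite V \<and> finite E \<and> finite F \<and> finite C \<and>
     (\<forall>e\<in>E. ends e \<subseteq> V \<and> (card (ends e) = 1 \<or> card (ends e) = 2)) \<and>
     (\<forall>f\<in>F. fbd f \<subseteq> E) \<and>
     (\<forall>\<nu>\<in>C. vbd \<nu> \<subseteq> F) \<and>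
     \<comment> \<open>every face lies in the boundary of at most two volumes\<close>
     (\<forall>f\<in>F. card (face_vols C vbd f) \<le> 2) \<and>
     \<comment> \<open>(L2) for Gamma: face boundaries are closed paths or open paths ending in partial edges\<close>
     (\<forall>f\<in>F. closed_path ends (fbd f) \<or> open_path_partial ends (fbd f)) \<and>
     \<comment> \<open>(L2) for the dual: dual faces are edges e, with dual boundary iota e, dual edges
         are faces with dual endpoints the volumes containing them\<close>
     (\<forall>e\<in>E. closed_path (face_vols C vbd) (iota F fbd e) \<or>
             open_path_partial (face_vols C vbd) (iota F fbd e)) \<and>
     \<comment> \<open>Gamma is connected\<close>
     (\<forall>u\<in>V. \<forall>w\<in>V. (u, w) \<in> {(a, b). \<exists>e\<in>E. a \<in> ends e \<and> b \<in> ends e}\<^sup>*) \<and>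
     \<comment> \<open>the dual complex is connected\<close>
     (\<forall>\<mu>\<in>C. \<forall>\<nu>\<in>C. (\<mu>, \<nu>) \<in> {(a, b). \<exists>f\<in>F. a \<in> face_vols C vbd f \<and> b \<in> face_vols C vbd f}\<^sup>*)"

text \<open>A Pauli operator up to phase is its X-support and Z-support.\<close>
type_synonym 'f pauli = "'f set \<times> 'f set"

definition symdiff :: "'a set \<Rightarrow> 'a set \<Rightarrow> 'a set" where
  "symdiff A B = (A - B) \<union> (B - A)"

definition pmult :: "'f pauli \<Rightarrow> 'f pauli \<Rightarrow> 'f pauli" where
  "pmult p q = (symdiff (fst p) (fst q), symdiff (snd p) (snd q))"

definition pid :: "'f pauli" where "pid = ({}, {})"

definition Zop :: "'f \<Rightarrow> 'f pauli" where "Zop f = ({}, {f})"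

definition commutes :: "'f pauli \<Rightarrow> 'f pauli \<Rightarrow> bool" where
  "commutes p q \<longleftrightarrow> even (card (fst p \<inter> snd q) + card (snd p \<inter> fst q))"

inductive_set generated :: "'f pauli set \<Rightarrow> 'f pauli set" for G where
  gen_id: "pid \<in> generated G"
| gen_mult: "g \<in> G \<Longrightarrow> s \<in> generated G \<Longrightarrow> pmult g s \<in> generated G"

definition B_op :: "'f set \<Rightarrow> ('f \<Rightarrow> 'e set) \<Rightarrow> 'e \<Rightarrow> 'f pauli" where
  "B_op F fbd e = ({}, iota F fbd e)"

definition A_op :: "('c \<Rightarrow> 'f set) \<Rightarrow> 'c \<Rightarrow> 'f pauli" where
  "A_op vbd \<nu> = (vbd \<nu>, {})"

definition stabilizer_group ::
  "'e set \<Rightarrow> 'f set \<Rightarrow> 'c set \<Rightarrow> ('f \<Rightarrow> 'e set) \<Rightarrow> ('c \<Rightarrow> 'f set) \<Rightarrow> 'f pauli set" where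
  "stabilizer_group E F C fbd vbd =
     generated (B_op F fbd ` E \<union> A_op vbd ` C)"

definition face_path ::
  "'f set \<Rightarrow> 'c set \<Rightarrow> ('c \<Rightarrow> 'f set) \<Rightarrow> 'f list \<Rightarrow> 'c list \<Rightarrow> bool" where
  "face_path F C vbd fs vs \<longleftrightarrow>
     length fs \<ge> 1 \<and> length vs = length fs - 1 \<and> distinct vs \<and>
     set fs \<subseteq> F \<and> set vs \<subseteq> C \<and>
     (\<forall>i < length vs. fs ! i \<in> vbd (vs ! i) \<and> fs ! Suc i \<in> vbd (vs ! i))"

definition WZ :: "'f list \<Rightarrow> 'f pauli" where
  "WZ fs = foldr (\<lambda>f p. pmult (Zop f) p) fs pid"

end

theory Submission
  imports Defs
begin

text \<open>The X-support of a stabilizer is a symmetric difference of volume boundaries, so the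
Z-operator W(\<rho>) commutes with the whole stabilizer group as soon as it meets every volume
boundary in an even number of faces. Close the volume sequence of \<rho> to the cycle
nu_0, nu_1, ..., nu_(m-1), nu_0. The face f_i lies in its two distinct cyclic neighbours
nu_(i-1) and nu_i, and, since a face lies in at most two volumes, in no other volume. Hence the
number of faces of \<rho> in the boundary of a volume \<nu> is twice the number of occurrences of \<nu>
in the cycle.\<close>

lemma Int_symdiff_distrib: "Z \<inter> symdiff A B = symdiff (Z \<inter> A) (Z \<inter> B)"
  by (auto simp: symdiff_def)

lemma even_card_symdiff_iff:
  assumes "finite A" "finite B"
  shows "even (card (symdiff A B)) \<longleftrightarrow> (even (card A) \<longleftrightarrow> even (card B))"
proof -
  have "symdiff A B = (A \<union> B) - (A \<inter> B)"
    by (auto simp: symdiff_def)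
  then have "card (symdiff A B) = card (A \<union> B) - card (A \<inter> B)"
    using assms by (metis card_Diff_subset finite_Int Int_lower1 Un_upper1 subset_trans)
  moreover have "card A + card B = card (A \<union> B) + card (A \<inter> B)"
    using assms by (rule card_Un_Int)
  moreover have "card (A \<inter> B) \<le> card (A \<union> B)"
    using assms by (intro card_mono) auto
  ultimately have "card (symdiff A B) + 2 * card (A \<inter> B) = card A + card B"
    by linarith
  from arg_cong[OF this, of even] show ?thesis
    by simp
qed

lemma commutes_pmult_iff:
  assumes "finite (fst p)" "finite (snd p)"
  shows "commutes p (pmult q r) \<longleftrightarrow> (commutes p q \<longleftrightarrow> commutes p r)"
  using assms by (auto simp: commutes_def pmult_def Int_symdiff_distrib even_card_symdiff_iff)

lemma commutes_generated:
  assumes "finite (fst p)" "finite (snd p)" "\<forall>g\<in>G. commutes p g" "s \<in> generated G"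
  shows "commutes p s"
  using assms(4)
proof induction
  case gen_id
  then show ?case by (simp add: commutes_def pid_def)
next
  case (gen_mult g s)
  then show ?case using assms(1-3) by (simp add: commutes_pmult_iff)
qed

lemma fst_WZ [simp]: "fst (WZ fs) = {}"
  by (induction fs) (auto simp: WZ_def pmult_def Zop_def pid_def symdiff_def)

lemma snd_WZ_Cons: "snd (WZ (f # fs)) = symdiff {f} (snd (WZ fs))"
  by (simp add: WZ_def pmult_def Zop_def)

lemma finite_snd_WZ: "finite (snd (WZ fs))"
  by (induction fs) (auto simp: WZ_def pmult_def Zop_def pid_def symdiff_def)

lemma even_card_snd_WZ_Int_iff:
  "even (card (snd (WZ fs) \<inter> S)) \<longleftrightarrow> even (length (filter (\<lambda>f. f \<in> S) fs))"
proof (induction fs)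
  case Nil
  then show ?case by (simp add: WZ_def pid_def)
next
  case (Cons f fs)
  have "snd (WZ (f # fs)) \<inter> S = symdiff ({f} \<inter> S) (snd (WZ fs) \<inter> S)"
    by (simp add: snd_WZ_Cons Int_commute Int_symdiff_distrib)
  then show ?case
    using Cons even_card_symdiff_iff[of "{f} \<inter> S" "snd (WZ fs) \<inter> S"] finite_snd_WZ[of fs]
    by (cases "f \<in> S") auto
qed

lemma commutes_WZ_B_op: "commutes (WZ fs) (B_op F fbd e)"
  by (simp add: commutes_def B_op_def)

lemma commutes_WZ_A_op_iff:
  "commutes (WZ fs) (A_op vbd \<nu>) \<longleftrightarrow> even (length (filter (\<lambda>f. f \<in> vbd \<nu>) fs))"
  by (simp add: commutes_def A_op_def even_card_snd_WZ_Int_iff)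

lemma length_filter_eq_count_list_add:
  assumes "length as = length fs" "length bs = length fs"
    and "\<And>i. i < length fs \<Longrightarrow> P (fs ! i) \<longleftrightarrow> as ! i = x \<or> bs ! i = x"
    and "\<And>i. i < length fs \<Longrightarrow> as ! i \<noteq> bs ! i"
  shows "length (filter P fs) = count_list as x + count_list bs x"
proof -
  have "length fs = length as" "length as = length bs"
    using assms(1,2) by simp_all
  then show ?thesis
    using assms(3,4)
  proof (induction fs as bs rule: list_induct3)
    case Nil
    then show ?case by simp
  next
    case (Cons f fs a as b bs)
    have "length (filter P fs) = count_list as x + count_list bs x"
      using Cons.prems by (intro Cons.IH) fastforce+
    moreover have "P f \<longleftrightarrow> a = x \<or> b = x" "a \<noteq> b"
      using Cons.prems(1,2)[of 0] by auto
    ultimately show ?case by auto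
  qed
qed

lemma nth_neq_rotate1_nth:
  assumes "distinct xs" "2 \<le> length xs" "i < length xs"
  shows "xs ! i \<noteq> rotate1 xs ! i"
proof -
  have "Suc i mod length xs < length xs"
    using assms(3) by (intro mod_less_divisor) linarith
  moreover have "Suc i mod length xs \<noteq> i"
    using assms(2,3) by (cases "Suc i = length xs") simp_all
  ultimately show ?thesis
    using assms by (simp add: nth_rotate1 nth_eq_iff_index_eq)
qed

lemma face_vols_eq_doubleton:
  assumes "finite C" "card (face_vols C vbd f) \<le> 2"
    and "a \<in> C" "b \<in> C" "a \<noteq> b" "f \<in> vbd a" "f \<in> vbd b"
  shows "face_vols C vbd f = {a, b}"
proof -
  have "finite (face_vols C vbd f)"
    using assms(1) by (simp add: face_vols_def)
  moreover have "{a, b} \<subseteq> face_vols C vbd f"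
    using assms(3-7) by (auto simp: face_vols_def)
  moreover have "card (face_vols C vbd f) \<le> card {a, b}"
    using assms(2,5) by simp
  ultimately show ?thesis
    by (metis card_seteq)
qed

lemma face_cycle_incident:
  assumes "face_path F C vbd fs vs" "hd fs \<in> vbd \<nu>0" "last fs \<in> vbd \<nu>0" "i < length fs"
  shows "fs ! i \<in> vbd ((\<nu>0 # vs) ! i)" "fs ! i \<in> vbd (rotate1 (\<nu>0 # vs) ! i)"
proof -
  have len: "length vs = length fs - 1" "fs \<noteq> []"
    and step: "\<And>j. j < length vs \<Longrightarrow> fs ! j \<in> vbd (vs ! j) \<and> fs ! Suc j \<in> vbd (vs ! j)"
    using assms(1) by (auto simp: face_path_def)
  show "fs ! i \<in> vbd ((\<nu>0 # vs) ! i)"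
  proof (cases i)
    case 0
    then show ?thesis using assms(2) len(2) by (simp add: hd_conv_nth)
  next
    case (Suc j)
    then show ?thesis using step[of j] assms(4) len(1) by simp
  qed
  show "fs ! i \<in> vbd (rotate1 (\<nu>0 # vs) ! i)"
  proof (cases "i < length vs")
    case True
    then show ?thesis using step[of i] by (simp add: nth_append)
  next
    case False
    then have "i = length fs - 1" using assms(4) len(1) by simp
    then show ?thesis using assms(3) len by (simp add: last_conv_nth nth_append)
  qed
qed

lemma even_card_faces_in_volume_of_face_cycle:
  assumes "finite C" "\<forall>f\<in>F. card (face_vols C vbd f) \<le> 2"
    and path: "face_path F C vbd fs vs" "2 \<le> length fs"
    and cycle: "\<nu>0 \<in> C" "\<nu>0 \<notin> set vs" "hd fs \<in> vbd \<nu>0" "last fs \<in> vbd \<nu>0"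
    and "\<nu> \<in> C"
  shows "even (length (filter (\<lambda>f. f \<in> vbd \<nu>) fs))"
proof -
  define cyc where "cyc = \<nu>0 # vs"
  have len: "length cyc = length fs" "length (rotate1 cyc) = length fs"
    using path by (auto simp: face_path_def cyc_def)
  have cyc_C: "set cyc \<subseteq> C" and "distinct cyc"
    using path(1) cycle(1,2) by (auto simp: face_path_def cyc_def)
  have adjacent_distinct: "cyc ! i \<noteq> rotate1 cyc ! i" if "i < length fs" for i
    using \<open>distinct cyc\<close> path(2) len that by (intro nth_neq_rotate1_nth) simp_all
  have vols: "face_vols C vbd (fs ! i) = {cyc ! i, rotate1 cyc ! i}" if "i < length fs" for i
  proof (rule face_vols_eq_doubleton)
    show "card (face_vols C vbd (fs ! i)) \<le> 2"
      using assms(2) path(1) nth_mem[OF that] by (auto simp: face_path_def)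
    show "cyc ! i \<in> C" "rotate1 cyc ! i \<in> C"
      using cyc_C len that nth_mem[of i cyc] nth_mem[of i "rotate1 cyc"] by auto
    show "fs ! i \<in> vbd (cyc ! i)" "fs ! i \<in> vbd (rotate1 cyc ! i)"
      using face_cycle_incident[OF path(1) cycle(3,4) that] by (simp_all add: cyc_def)
  qed (use assms(1) adjacent_distinct[OF that] in simp_all)
  have "length (filter (\<lambda>f. f \<in> vbd \<nu>) fs) = count_list cyc \<nu> + count_list (rotate1 cyc) \<nu>"
  proof (rule length_filter_eq_count_list_add[OF len(1,2) _ adjacent_distinct])
    fix i assume "i < length fs"
    have "fs ! i \<in> vbd \<nu> \<longleftrightarrow> \<nu> \<in> face_vols C vbd (fs ! i)"
      using \<open>\<nu> \<in> C\<close> by (simp add: face_vols_def)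
    then show "fs ! i \<in> vbd \<nu> \<longleftrightarrow> cyc ! i = \<nu> \<or> rotate1 cyc ! i = \<nu>"
      using vols[OF \<open>i < length fs\<close>] by auto
  qed
  also have "count_list (rotate1 cyc) \<nu> = count_list cyc \<nu>"
    by (simp add: cyc_def)
  finally show ?thesis by simp
qed

theorem lemma2:
  fixes V :: "'v set" and E :: "'e set" and F :: "'f set" and C :: "'c set"
    and ends :: "'e \<Rightarrow> 'v set" and fbd :: "'f \<Rightarrow> 'e set" and vbd :: "'c \<Rightarrow> 'f set"
    and fs :: "'f list" and vs :: "'c list" and \<nu>0 :: 'c
  assumes "lattice3 V E F C ends fbd vbd"
    and "face_path F C vbd fs vs"
    and "length fs \<ge> 2"
    and "\<nu>0 \<in> C" and "\<nu>0 \<notin> set vs"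
    and "hd fs \<in> vbd \<nu>0" and "last fs \<in> vbd \<nu>0"
  shows "\<forall>s \<in> stabilizer_group E F C fbd vbd. commutes (WZ fs) s"
proof -
  have "finite C" and "\<forall>f\<in>F. card (face_vols C vbd f) \<le> 2"
    using assms(1) by (simp_all add: lattice3_def)
  then have "\<forall>g \<in> B_op F fbd ` E \<union> A_op vbd ` C. commutes (WZ fs) g"
    using even_card_faces_in_volume_of_face_cycle[OF _ _ assms(2-7)]
    by (auto simp: commutes_WZ_B_op commutes_WZ_A_op_iff)
  then show ?thesis
    unfolding stabilizer_group_def
    using commutes_generated[of "WZ fs", OF _ finite_snd_WZ] by simp
qed

end
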